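(* Let $G=(V,E)$ be a finite simple graph which is $S_{1,1,5}$-free, $K_4$-free, diamond-free and butterfly-free. Let $xy\in E$ and let $r$ be a vertex with $rx\in E$ and $ry\notin E$. For $i\ge 1$ let $N_i=\{z\in V:\operatorname{dist}_G(z,\{x,y\})=i\}$. Assume $N_2$ is an independent set and every vertex of $N_3$ has exactly one neighbor in $N_2$. If $|N_2|\ge 5$ and $N_5\ne\emptyset$, then $G[N_5]$ contains neither an induced path on three vertices nor a triangle.
   Context: $S_{1,1,5}$ is the tree with a center $u$ adjacent to $a$, $b$ and $z_1$, where $u,z_1,\dots,z_5$ is an induced path, and no other edges. A diamond is $K_4$ minus one edge; a butterfly consists of two disjoint edges (inducing $2K_2$) together with a vertex adjacent to all four of their endpoints. $\operatorname{dist}_G(z,\{x,y\})$ is the minimum of the distances from $z$ to $x$ and to $y$. *)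

theory Defs
  imports Main
begin

definition simple_graph :: "'a set \<Rightarrow> ('a \<Rightarrow> 'a \<Rightarrow> bool) \<Rightarrow> bool" where
  "simple_graph V E \<longleftrightarrow> finite V \<and> (\<forall>u v. E u v \<longrightarrow> u \<in> V \<and> v \<in> V)
     \<and> (\<forall>u v. E u v \<longrightarrow> E v u) \<and> (\<forall>u. \<not> E u u)"

definition has_induced :: "'a set \<Rightarrow> ('a \<Rightarrow> 'a \<Rightarrow> bool) \<Rightarrow> nat \<Rightarrow> (nat \<Rightarrow> nat \<Rightarrow> bool) \<Rightarrow> bool" where
  "has_induced W E k H \<longleftrightarrow> (\<exists>f. inj_on f {..<k} \<and> f ` {..<k} \<subseteq> W \<and>
      (\<forall>i<k. \<forall>j<k. E (f i) (f j) \<longleftrightarrow> H i j))"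

definition sym_edges :: "(nat \<times> nat) list \<Rightarrow> nat \<Rightarrow> nat \<Rightarrow> bool" where
  "sym_edges es i j \<longleftrightarrow> (i, j) \<in> set es \<or> (j, i) \<in> set es"

(* S_{1,1,5}: u=0, a=1, b=2, z1..z5 = 3..7; path u z1 ... z5. *)
definition S115 :: "nat \<Rightarrow> nat \<Rightarrow> bool" where
  "S115 = sym_edges [(0,1),(0,2),(0,3),(3,4),(4,5),(5,6),(6,7)]"

definition K4 :: "nat \<Rightarrow> nat \<Rightarrow> bool" where
  "K4 = sym_edges [(0,1),(0,2),(0,3),(1,2),(1,3),(2,3)]"

definition diamond :: "nat \<Rightarrow> nat \<Rightarrow> bool" where
  "diamond = sym_edges [(0,1),(0,2),(0,3),(1,2),(1,3)]"

definition butterfly :: "nat \<Rightarrow> nat \<Rightarrow> bool" where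
  "butterfly = sym_edges [(1,2),(3,4),(0,1),(0,2),(0,3),(0,4)]"

definition P3 :: "nat \<Rightarrow> nat \<Rightarrow> bool" where
  "P3 = sym_edges [(0,1),(1,2)]"

definition K3 :: "nat \<Rightarrow> nat \<Rightarrow> bool" where
  "K3 = sym_edges [(0,1),(1,2),(0,2)]"

fun walk :: "'a set \<Rightarrow> ('a \<Rightarrow> 'a \<Rightarrow> bool) \<Rightarrow> nat \<Rightarrow> 'a \<Rightarrow> 'a \<Rightarrow> bool" where
  "walk V E 0 u v \<longleftrightarrow> u = v \<and> u \<in> V"
| "walk V E (Suc n) u v \<longleftrightarrow> (\<exists>w. E u w \<and> walk V E n w v)"

definition dist_set_eq :: "'a set \<Rightarrow> ('a \<Rightarrow> 'a \<Rightarrow> bool) \<Rightarrow> 'a \<Rightarrow> 'a set \<Rightarrow> nat \<Rightarrow> bool" where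
  "dist_set_eq V E z S i \<longleftrightarrow> (\<exists>s\<in>S. walk V E i z s) \<and> (\<forall>j<i. \<forall>s\<in>S. \<not> walk V E j z s)"

definition layer :: "'a set \<Rightarrow> ('a \<Rightarrow> 'a \<Rightarrow> bool) \<Rightarrow> 'a \<Rightarrow> 'a \<Rightarrow> nat \<Rightarrow> 'a set" where
  "layer V E x y i = {z \<in> V. dist_set_eq V E z {x, y} i}"

end

(*
  Suppose a vertex b of N5 had two distinct neighbours a, c in N5. An edge lies in at most one
  triangle (no K4, no diamond), so one of them, say c, is not adjacent to the neighbour d4 of b
  in N4. Descending gives a path d1 d2 d3 d4 b c with d1 adjacent to x, say. Because N2 is
  independent and d3 has no N2-neighbour besides d2, this path is the long leg of an S_{1,1,5}
  around many low vertices. It follows that the vertices of N2 other than d2 have pairwise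
  distinct neighbours in N1 that avoid d2, hence there are at least four such N1-vertices; a
  case distinction on the adjacency of d1 and y, using freeness of S_{1,1,5}, K4, diamond and
  butterfly, shows there are at most three.
*)
theory Submission
  imports Defs
begin

lemma card_le_2_if_no_three_distinct:
  assumes "finite S"
    and "\<And>a b c. a \<in> S \<Longrightarrow> b \<in> S \<Longrightarrow> c \<in> S \<Longrightarrow> a \<noteq> b \<Longrightarrow> a \<noteq> c \<Longrightarrow> b \<noteq> c \<Longrightarrow> False"
  shows "card S \<le> 2"
proof (rule ccontr)
  assume "\<not> card S \<le> 2"
  then obtain T where T: "T \<subseteq> S" "card T = 3"
    using obtain_subset_with_card_n[of 3 S] by force
  then obtain a b c where "T = {a, b, c}" "a \<noteq> b" "b \<noteq> c" "a \<noteq> c"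
    unfolding card_3_iff by blast
  then show False
    using assms(2) T(1) by blast
qed

lemma has_induced_of_list:
  assumes "distinct vs" "set vs \<subseteq> W"
    and "\<forall>i<length vs. \<forall>j<length vs. E (vs ! i) (vs ! j) \<longleftrightarrow> H i j"
  shows "has_induced W E (length vs) H"
  unfolding has_induced_def
proof (intro exI[of _ "(!) vs"] conjI)
  show "inj_on ((!) vs) {..<length vs}"
    using assms(1) by (simp add: inj_on_def nth_eq_iff_index_eq)
  show "(!) vs ` {..<length vs} \<subseteq> W"
    using assms(2) by (auto simp: set_conv_nth)
qed (use assms(3) in auto)

lemma has_induced_3_path:
  assumes "has_induced W E 3 H" "H 0 1" "H 1 2"
  obtains a b c where "a \<in> W" "b \<in> W" "c \<in> W" "a \<noteq> c" "E a b" "E b c"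
proof -
  obtain f where f: "inj_on f {..<3}" "f ` {..<3} \<subseteq> W" "\<forall>i<3. \<forall>j<3. E (f i) (f j) \<longleftrightarrow> H i j"
    using assms(1) unfolding has_induced_def by blast
  have "f 0 \<noteq> f 2"
    using inj_on_contraD[OF f(1), of 0 2] by simp
  with f(2,3) assms(2,3) show ?thesis
    by (intro that[of "f 0" "f 1" "f 2"]) auto
qed

lemma layer_sym: "layer V E x y = layer V E y x"
  unfolding layer_def dist_set_eq_def by (simp add: insert_commute)

lemma layer_subset: "layer V E x y i \<subseteq> V"
  unfolding layer_def by auto

lemma layer_unique: "z \<in> layer V E x y i \<Longrightarrow> z \<in> layer V E x y j \<Longrightarrow> i = j"
  unfolding layer_def dist_set_eq_def by (cases i j rule: linorder_cases) blast+

lemma layer_0: "x \<in> V \<Longrightarrow> y \<in> V \<Longrightarrow> layer V E x y 0 = {x, y}"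
  unfolding layer_def dist_set_eq_def by auto

lemma layer_edge_le_Suc:
  assumes graph: "simple_graph V E" and u: "u \<in> layer V E x y i" and v: "v \<in> layer V E x y j"
    and "E u v"
  shows "j \<le> Suc i"
proof (rule ccontr)
  assume "\<not> j \<le> Suc i"
  from u obtain s where s: "s \<in> {x, y}" "walk V E i u s"
    unfolding layer_def dist_set_eq_def by auto
  have "E v u"
    using \<open>E u v\<close> graph by (auto simp: simple_graph_def)
  with s have "walk V E (Suc i) v s"
    by auto
  moreover have "\<forall>k<j. \<forall>s\<in>{x, y}. \<not> walk V E k v s"
    using v unfolding layer_def dist_set_eq_def by blast
  moreover have "Suc i < j"
    using \<open>\<not> j \<le> Suc i\<close> by simp
  ultimately show False
    using s(1) by blast
qed

lemma layer_Suc_lower_neighbour: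
  assumes graph: "simple_graph V E" and z: "z \<in> layer V E x y (Suc i)"
  obtains w where "w \<in> layer V E x y i" "E z w"
proof -
  from z obtain s w where s: "s \<in> {x, y}" "E z w" "walk V E i w s"
    unfolding layer_def dist_set_eq_def by auto
  have "w \<in> V"
    using s(2) graph by (auto simp: simple_graph_def)
  moreover have "\<not> walk V E j w s'" if "j < i" "s' \<in> {x, y}" for j s'
  proof
    assume "walk V E j w s'"
    with s(2) have "walk V E (Suc j) z s'"
      by auto
    with z that show False
      unfolding layer_def dist_set_eq_def by auto
  qed
  ultimately have "w \<in> layer V E x y i"
    using s unfolding layer_def dist_set_eq_def by auto
  with s(2) show ?thesis
    using that by blast
qed

(*
  vs ! i is placed in layer ls ! i. Non-adjacency across non-consecutive layers and
  distinctness across different layers are automatic, so only the remaining pairs are checked.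
*)
definition layered_copy ::
    "'a set \<Rightarrow> ('a \<Rightarrow> 'a \<Rightarrow> bool) \<Rightarrow> 'a \<Rightarrow> 'a \<Rightarrow> 'a list \<Rightarrow> nat list \<Rightarrow> (nat \<Rightarrow> nat \<Rightarrow> bool) \<Rightarrow> bool"
  where
  "layered_copy V E x y vs ls H \<longleftrightarrow> length ls = length vs \<and>
     (\<forall>i<length vs. vs ! i \<in> layer V E x y (ls ! i)) \<and>
     (\<forall>i<length vs. \<forall>j<length vs. H i j \<longrightarrow> E (vs ! i) (vs ! j)) \<and>
     (\<forall>i<length vs. \<forall>j<length vs. i \<noteq> j \<longrightarrow> \<not> H i j \<longrightarrow> ls ! i \<le> Suc (ls ! j) \<longrightarrow>
        ls ! j \<le> Suc (ls ! i) \<longrightarrow> \<not> E (vs ! i) (vs ! j)) \<and>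
     (\<forall>i<length vs. \<forall>j<length vs. i \<noteq> j \<longrightarrow> ls ! i = ls ! j \<longrightarrow> vs ! i \<noteq> vs ! j)"

lemmas layered_copy_unfold = layered_copy_def All_less_Suc numeral_eq_Suc sym_edges_def

lemma has_induced_if_layered_copy:
  assumes graph: "simple_graph V E" and copy: "layered_copy V E x y vs ls H"
    and irrefl: "\<forall>i<length vs. \<not> H i i"
  shows "has_induced V E (length vs) H"
proof (rule has_induced_of_list)
  have in_layer: "\<forall>i<length vs. vs ! i \<in> layer V E x y (ls ! i)"
    using copy unfolding layered_copy_def by blast
  then show "set vs \<subseteq> V"
    using layer_subset by (fastforce simp: set_conv_nth)
  show "distinct vs"
    unfolding distinct_conv_nth
    using copy layer_unique in_layer unfolding layered_copy_def by metis
  show "\<forall>i<length vs. \<forall>j<length vs. E (vs ! i) (vs ! j) \<longleftrightarrow> H i j"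
  proof (intro allI impI)
    fix i j assume "i < length vs" "j < length vs"
    moreover have "\<not> E (vs ! i) (vs ! j)" if "\<not> ls ! i \<le> Suc (ls ! j) \<or> \<not> ls ! j \<le> Suc (ls ! i)"
      using that layer_edge_le_Suc[OF graph] in_layer \<open>i < length vs\<close> \<open>j < length vs\<close> graph
      unfolding simple_graph_def by metis
    ultimately show "E (vs ! i) (vs ! j) \<longleftrightarrow> H i j"
      using copy irrefl graph unfolding layered_copy_def simple_graph_def by metis
  qed
qed

locale pattern_free_graph =
  fixes V :: "'a set" and E :: "'a \<Rightarrow> 'a \<Rightarrow> bool"
  assumes graph: "simple_graph V E"
    and S115_free: "\<not> has_induced V E 8 S115"
    and K4_free: "\<not> has_induced V E 4 K4"
    and diamond_free: "\<not> has_induced V E 4 diamond"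
    and butterfly_free: "\<not> has_induced V E 5 butterfly"
begin

lemma E_sym: "E u v \<longleftrightarrow> E v u"
  using graph unfolding simple_graph_def by blast

lemma E_irrefl: "\<not> E u u"
  using graph unfolding simple_graph_def by blast

lemma E_neq: "E u v \<Longrightarrow> u \<noteq> v"
  using graph unfolding simple_graph_def by blast

lemma E_in_V: "E u v \<Longrightarrow> u \<in> V" "E u v \<Longrightarrow> v \<in> V"
  using graph unfolding simple_graph_def by blast+

lemma common_neighbour_of_edge_unique:
  assumes "E u v" "E u s" "E v s" "E u t" "E v t"
  shows "s = t"
proof (rule ccontr)
  assume "s \<noteq> t"
  have vs: "distinct [u, v, s, t]" "set [u, v, s, t] \<subseteq> V"
    using assms \<open>s \<noteq> t\<close> E_neq E_in_V E_sym by auto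
  show False
  proof (cases "E s t")
    case True
    then have "has_induced V E 4 K4"
      using has_induced_of_list[OF vs, of E K4] assms
      by (simp add: All_less_Suc numeral_eq_Suc K4_def sym_edges_def E_sym E_irrefl)
    with K4_free show False ..
  next
    case False
    then have "has_induced V E 4 diamond"
      using has_induced_of_list[OF vs, of E diamond] assms
      by (simp add: All_less_Suc numeral_eq_Suc diamond_def sym_edges_def E_sym E_irrefl)
    with diamond_free show False ..
  qed
qed

end

locale edge_layering = pattern_free_graph +
  fixes x y :: 'a
  assumes edge_xy: "E x y"
    and N2_independent: "\<forall>u\<in>layer V E x y 2. \<forall>v\<in>layer V E x y 2. \<not> E u v"
    and N3_unique_lower_neighbour: "\<forall>z\<in>layer V E x y 3. card {w \<in> layer V E x y 2. E z w} = 1"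
begin

abbreviation N :: "nat \<Rightarrow> 'a set" where "N \<equiv> layer V E x y"

lemma N_0: "N 0 = {x, y}"
  using layer_0 E_in_V edge_xy by metis

lemma lower_neighbour:
  assumes "z \<in> N i" "0 < i"
  obtains w where "w \<in> N (i - 1)" "E z w"
  using layer_Suc_lower_neighbour[OF graph, of z x y "i - 1"] assms by auto

lemma N1_adj_x_or_y: "q \<in> N 1 \<Longrightarrow> E q x \<or> E q y"
  using lower_neighbour[of q 1] N_0 by auto

lemma finite_layer: "finite (N i)"
  using graph layer_subset[of V E x y i] finite_subset unfolding simple_graph_def by metis

lemma no_layered_S115: "length vs = 8 \<Longrightarrow> \<not> layered_copy V E x y vs ls S115"
  using has_induced_if_layered_copy[OF graph] S115_free
  by (force simp: S115_def sym_edges_def)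

lemma no_layered_butterfly: "length vs = 5 \<Longrightarrow> \<not> layered_copy V E x y vs ls butterfly"
  using has_induced_if_layered_copy[OF graph] butterfly_free
  by (force simp: butterfly_def sym_edges_def)

end

locale path_to_N5 = edge_layering +
  fixes d1 d2 d3 d4 b c :: 'a
  assumes path_layers: "d1 \<in> N 1" "d2 \<in> N 2" "d3 \<in> N 3" "d4 \<in> N 4" "b \<in> N 5" "c \<in> N 5"
    and path_edges: "E x d1" "E d1 d2" "E d2 d3" "E d3 d4" "E d4 b" "E b c"
    and no_chord: "\<not> E d4 c"
begin

lemma d3_N2_neighbour: "p \<in> N 2 \<Longrightarrow> E d3 p \<Longrightarrow> p = d2"
proof -
  assume p: "p \<in> N 2" "E d3 p"
  obtain w where w: "{w' \<in> N 2. E d3 w'} = {w}"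
    using N3_unique_lower_neighbour path_layers(3) by (meson card_1_singletonE)
  have "p \<in> {w' \<in> N 2. E d3 w'}" "d2 \<in> {w' \<in> N 2. E d3 w'}"
    using p path_layers(2) path_edges(3) E_sym by auto
  then show "p = d2"
    unfolding w by simp
qed

lemma N1_neighbour_of_d2_has_no_other_N2_neighbour:
  assumes w: "w \<in> N 1" "E w d2" and p: "p \<in> N 2" "E w p"
  shows "p = d2"
proof (rule ccontr)
  assume "p \<noteq> d2"
  then have "\<not> E d3 p" "\<not> E d2 p"
    using d3_N2_neighbour p N2_independent path_layers(2) by auto
  obtain w0 where "w0 \<in> N 0" "E w w0"
    using lower_neighbour[OF w(1)] by auto
  then have "layered_copy V E x y [w, p, w0, d2, d3, d4, b, c] [1, 2, 0, 2, 3, 4, 5, 5] S115"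
    using w p \<open>p \<noteq> d2\<close> \<open>\<not> E d3 p\<close> \<open>\<not> E d2 p\<close> path_layers path_edges no_chord
    by (simp add: layered_copy_unfold S115_def E_sym E_neq)
  then show False
    using no_layered_S115 by simp
qed

definition N1_off_d2 :: "'a set" where
  "N1_off_d2 = {q \<in> N 1. \<not> E q d2}"

lemma finite_N1_off_d2: "finite N1_off_d2"
  using finite_layer[of 1] by (simp add: N1_off_d2_def)

lemma N1_off_d2_neq_d1: "q \<in> N1_off_d2 \<Longrightarrow> q \<noteq> d1"
  using path_edges(2) unfolding N1_off_d2_def by blast

lemma N1_off_d2_N2_neighbour_unique:
  assumes "q \<in> N1_off_d2" and p: "p \<in> N 2" "p' \<in> N 2" "E q p" "E q p'"
  shows "p = p'"
proof (rule ccontr)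
  assume "p \<noteq> p'"
  have q: "q \<in> N 1" "\<not> E q d2"
    using assms(1) unfolding N1_off_d2_def by auto
  then have "p \<noteq> d2" "p' \<noteq> d2"
    using p by auto
  then have non_edges: "\<not> E d1 p" "\<not> E d1 p'" "\<not> E d2 p" "\<not> E d2 p'" "\<not> E d3 p" "\<not> E d3 p'" "\<not> E p p'"
    using N1_neighbour_of_d2_has_no_other_N2_neighbour[OF path_layers(1) path_edges(2)]
      d3_N2_neighbour N2_independent p path_layers(2) by blast+
  note facts = q p N1_off_d2_neq_d1[OF assms(1)] \<open>p \<noteq> p'\<close> \<open>p \<noteq> d2\<close> \<open>p' \<noteq> d2\<close> non_edges path_layers path_edges no_chord
  obtain z0 where "z0 \<in> N 0" "E q z0"
    using lower_neighbour[OF q(1)] by auto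
  then have "E q x \<or> E q y"
    using N_0 by auto
  moreover have "x \<in> N 0" "y \<in> N 0"
    using N_0 by auto
  ultimately consider "E q d1" | z where "\<not> E q d1" "z \<in> N 0" "E q z" "E z d1"
    | "\<not> E q d1" "\<not> E q x" "E q y" "\<not> E y d1"
    using path_edges(1) by blast
  then show False
  proof cases
    case 1
    then have "layered_copy V E x y [q, p, p', d1, d2, d3, d4, b] [1, 2, 2, 1, 2, 3, 4, 5] S115"
      using facts by (simp add: layered_copy_unfold S115_def E_sym E_neq)
    then show False
      using no_layered_S115 by simp
  next
    case (2 z)
    then have "layered_copy V E x y [q, p, p', z, d1, d2, d3, d4] [1, 2, 2, 0, 1, 2, 3, 4] S115"
      using facts by (simp add: layered_copy_unfold S115_def E_sym E_neq)
    then show False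
      using no_layered_S115 by simp
  next
    case 3
    then have "layered_copy V E x y [q, p, p', y, x, d1, d2, d3] [1, 2, 2, 0, 0, 1, 2, 3] S115"
      using facts edge_xy N_0 by (simp add: layered_copy_unfold S115_def E_sym E_neq)
    then show False
      using no_layered_S115 by simp
  qed
qed

lemma card_N2_le_card_N1_off_d2: "card (N 2 - {d2}) \<le> card N1_off_d2"
proof (rule card_le_if_inj_on_rel[where r = "\<lambda>p q. E q p", OF finite_N1_off_d2])
  fix p assume p: "p \<in> N 2 - {d2}"
  then obtain q where q: "q \<in> N 1" "E p q"
    using lower_neighbour[of p 2] by auto
  then have "\<not> E q d2"
    using N1_neighbour_of_d2_has_no_other_N2_neighbour[OF q(1)] p E_sym by auto
  with q show "\<exists>q. q \<in> N1_off_d2 \<and> E q p"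
    unfolding N1_off_d2_def by (auto simp: E_sym)
next
  fix p p' q assume "p \<in> N 2 - {d2}" "p' \<in> N 2 - {d2}" "q \<in> N1_off_d2" "E q p" "E q p'"
  then show "p = p'"
    using N1_off_d2_N2_neighbour_unique[of q p p'] by blast
qed

lemma N1_off_d2_not_adj_d1:
  assumes q: "q \<in> N1_off_d2" and z: "z \<in> N 0" "E d1 z" "\<not> E q z"
  shows "\<not> E q d1"
proof
  assume "E q d1"
  then have "layered_copy V E x y [d1, z, q, d2, d3, d4, b, c] [1, 0, 1, 2, 3, 4, 5, 5] S115"
    using q z path_layers path_edges no_chord
    by (simp add: N1_off_d2_def layered_copy_unfold S115_def E_sym E_neq)
  then show False
    using no_layered_S115 by simp
qed

lemma N1_off_d2_N0_neighbour_unique_if_d1_y: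
  assumes d1_y: "E d1 y" and q: "q \<in> N1_off_d2" "q' \<in> N1_off_d2" and z: "z \<in> N 0" "E q z" "E q' z"
  shows "q = q'"
proof (rule ccontr)
  assume "q \<noteq> q'"
  obtain z' where z': "N 0 = {z, z'}" "z \<noteq> z'"
    using z(1) N_0 E_neq[OF edge_xy] by auto
  have d1_N0: "E d1 z" "E d1 z'" "E z z'"
    using z' N_0 d1_y path_edges(1) edge_xy E_sym by (auto simp: doubleton_eq_iff)
  have no_z': "\<not> E u z'" if "u \<in> N1_off_d2" "E u z" for u
    using common_neighbour_of_edge_unique[OF d1_N0(3), of u d1] that d1_N0 N1_off_d2_neq_d1 E_sym
    by auto
  have non_edges: "\<not> E q z'" "\<not> E q' z'" "\<not> E q d1" "\<not> E q' d1"
    using no_z' N1_off_d2_not_adj_d1[of _ z'] q z z' d1_N0 by auto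
  note facts = q z z' d1_N0 non_edges \<open>q \<noteq> q'\<close> N1_off_d2_neq_d1[OF q(1)] N1_off_d2_neq_d1[OF q(2)]
    path_layers path_edges
  have "E q q'"
  proof (rule ccontr)
    assume "\<not> E q q'"
    then have "layered_copy V E x y [z, q, q', d1, d2, d3, d4, b] [0, 1, 1, 1, 2, 3, 4, 5] S115"
      using facts by (simp add: N1_off_d2_def layered_copy_unfold S115_def E_sym E_neq)
    then show False
      using no_layered_S115 by simp
  qed
  then have "layered_copy V E x y [z, q, q', z', d1] [0, 1, 1, 0, 1] butterfly"
    using facts by (simp add: N1_off_d2_def layered_copy_unfold butterfly_def E_sym E_neq)
  then show False
    using no_layered_butterfly by simp
qed

lemma card_N1_off_d2_le_2_if_d1_y: "E d1 y \<Longrightarrow> card N1_off_d2 \<le> 2"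
proof (rule card_le_2_if_no_three_distinct[OF finite_N1_off_d2])
  fix q q' q'' assume "E d1 y" and q: "q \<in> N1_off_d2" "q' \<in> N1_off_d2" "q'' \<in> N1_off_d2"
    and "q \<noteq> q'" "q \<noteq> q''" "q' \<noteq> q''"
  moreover have "E u x \<or> E u y" if "u \<in> N1_off_d2" for u
    using that N1_adj_x_or_y unfolding N1_off_d2_def by blast
  moreover have "x \<in> N 0" "y \<in> N 0"
    using N_0 by auto
  ultimately show False
    using N1_off_d2_N0_neighbour_unique_if_d1_y by metis
qed

lemma N1_off_d2_nonadj_y_unique:
  assumes d1_y: "\<not> E d1 y" and q: "q \<in> N1_off_d2" "q' \<in> N1_off_d2" "\<not> E q y" "\<not> E q' y"
  shows "q = q'"
proof -
  have adj_x_d1: "E u x \<and> E u d1" if "u \<in> N1_off_d2" "\<not> E u y" for u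
  proof
    show "E u x"
      using N1_adj_x_or_y that unfolding N1_off_d2_def by blast
    show "E u d1"
    proof (rule ccontr)
      assume "\<not> E u d1"
      then have "layered_copy V E x y [x, y, u, d1, d2, d3, d4, b] [0, 0, 1, 1, 2, 3, 4, 5] S115"
        using that \<open>E u x\<close> d1_y edge_xy N_0 N1_off_d2_neq_d1[OF that(1)] path_layers path_edges
        by (simp add: N1_off_d2_def layered_copy_unfold S115_def E_sym E_neq)
      then show False
        using no_layered_S115 by simp
    qed
  qed
  show "q = q'"
    using common_neighbour_of_edge_unique[OF path_edges(1), of q q'] adj_x_d1 q E_sym by auto
qed

lemma N1_off_d2_adj_only_y_adjacent:
  assumes d1_y: "\<not> E d1 y" and q: "q \<in> N1_off_d2" "q' \<in> N1_off_d2" "q \<noteq> q'"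
    and y: "E q y" "E q' y" "\<not> E q x" "\<not> E q' x"
  shows "E q q'"
proof (rule ccontr)
  assume "\<not> E q q'"
  moreover have "\<not> E q d1" "\<not> E q' d1"
    using N1_off_d2_not_adj_d1[of _ x] q y N_0 path_edges(1) E_sym by auto
  ultimately have "layered_copy V E x y [y, q, q', x, d1, d2, d3, d4] [0, 1, 1, 0, 1, 2, 3, 4] S115"
    using q y d1_y edge_xy N_0 N1_off_d2_neq_d1[OF q(1)] N1_off_d2_neq_d1[OF q(2)] path_layers path_edges
    by (simp add: N1_off_d2_def layered_copy_unfold S115_def E_sym E_neq)
  then show False
    using no_layered_S115 by simp
qed

lemma N1_off_d2_adj_y_no_three:
  assumes d1_y: "\<not> E d1 y" and q: "q \<in> N1_off_d2" "q' \<in> N1_off_d2" "w \<in> N1_off_d2"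
    and distinct: "q \<noteq> q'" "q \<noteq> w" "q' \<noteq> w"
    and y: "E q y" "E q' y" "E w y" and not_x: "\<not> E q x" "\<not> E q' x"
  shows False
proof -
  have "E q q'"
    using N1_off_d2_adj_only_y_adjacent d1_y q distinct y not_x by blast
  then have no_triangle: "\<not> E q w" "\<not> E q' w"
    using common_neighbour_of_edge_unique[of y q q' w] common_neighbour_of_edge_unique[of y q' q w]
      y distinct E_sym by auto
  show False
  proof (cases "E w x")
    case True
    then have "layered_copy V E x y [y, x, w, q, q'] [0, 0, 1, 1, 1] butterfly"
      using q y not_x distinct \<open>E q q'\<close> no_triangle edge_xy N_0
      by (auto simp: N1_off_d2_def layered_copy_unfold butterfly_def E_sym)
    then show False
      using no_layered_butterfly by simp
  next
    case False
    then show False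
      using N1_off_d2_adj_only_y_adjacent[OF d1_y] q distinct y not_x no_triangle by metis
  qed
qed

lemma card_N1_off_d2_le_3_if_not_d1_y:
  assumes d1_y: "\<not> E d1 y"
  shows "card N1_off_d2 \<le> 3"
proof -
  let ?Y = "{q \<in> N1_off_d2. E q y}" and ?X = "{q \<in> N1_off_d2. \<not> E q y}"
  have "card ?X \<le> 1"
    using finite_N1_off_d2 N1_off_d2_nonadj_y_unique[OF d1_y] by (simp add: card_le_Suc0_iff_eq)
  moreover have "card ?Y \<le> 2"
  proof (rule card_le_2_if_no_three_distinct)
    show "finite ?Y"
      using finite_N1_off_d2 by simp
    fix q q' w assume "q \<in> ?Y" "q' \<in> ?Y" "w \<in> ?Y" "q \<noteq> q'" "q \<noteq> w" "q' \<noteq> w"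
    moreover have "u = v" if "u \<in> ?Y" "v \<in> ?Y" "E u x" "E v x" for u v
      using common_neighbour_of_edge_unique[OF edge_xy, of u v] that E_sym by auto
    ultimately show False
      using N1_off_d2_adj_y_no_three[OF d1_y, of q q' w] N1_off_d2_adj_y_no_three[OF d1_y, of q' w q]
        N1_off_d2_adj_y_no_three[OF d1_y, of q w q'] by blast
  qed
  moreover have "N1_off_d2 = ?X \<union> ?Y"
    by blast
  ultimately show ?thesis
    using card_Un_le[of ?X ?Y] by simp
qed

lemma card_N2_le_4: "card (N 2) \<le> 4"
proof -
  have "card N1_off_d2 \<le> 3"
    using card_N1_off_d2_le_2_if_d1_y card_N1_off_d2_le_3_if_not_d1_y by (cases "E d1 y") auto
  then have "card (N 2 - {d2}) \<le> 3"
    using card_N2_le_card_N1_off_d2 by linarith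
  then show ?thesis
    using path_layers(2) finite_layer by simp
qed

end

context edge_layering
begin

lemma edge_layering_swap: "edge_layering V E y x"
proof unfold_locales
  show "E y x"
    using edge_xy E_sym by simp
  show "\<forall>u\<in>layer V E y x 2. \<forall>v\<in>layer V E y x 2. \<not> E u v"
    using N2_independent unfolding layer_sym[of V E y x] .
  show "\<forall>z\<in>layer V E y x 3. card {w \<in> layer V E y x 2. E z w} = 1"
    using N3_unique_lower_neighbour unfolding layer_sym[of V E y x] .
qed

lemma N5_neighbours_unique:
  assumes N2: "5 \<le> card (N 2)" and N5: "a \<in> N 5" "b \<in> N 5" "c \<in> N 5" and edges: "E a b" "E b c"
  shows "a = c"
proof (rule ccontr)
  assume "a \<noteq> c"
  obtain d4 where d4: "d4 \<in> N 4" "E d4 b"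
    using lower_neighbour[OF N5(2)] E_sym by auto
  have "\<not> (E d4 a \<and> E d4 c)"
    using common_neighbour_of_edge_unique[OF d4(2), of a c] edges \<open>a \<noteq> c\<close> E_sym by auto
  then obtain c' where c': "c' \<in> N 5" "E b c'" "\<not> E d4 c'"
    using N5 edges E_sym by auto
  obtain d3 where d3: "d3 \<in> N 3" "E d3 d4"
    using lower_neighbour[OF d4(1)] E_sym by auto
  obtain d2 where d2: "d2 \<in> N 2" "E d2 d3"
    using lower_neighbour[OF d3(1)] E_sym by auto
  obtain d1 where d1: "d1 \<in> N 1" "E d1 d2"
    using lower_neighbour[OF d2(1)] E_sym by auto
  note path = d1 d2 d3 d4 N5(2) c' edges(2)
  show False
  proof (cases "E x d1")
    case True
    then have "path_to_N5 V E x y d1 d2 d3 d4 b c'"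
      using path by unfold_locales auto
    then show False
      using path_to_N5.card_N2_le_4 N2 by fastforce
  next
    case False
    then have "E y d1"
      using N1_adj_x_or_y[OF d1(1)] E_sym by auto
    then have "path_to_N5 V E y x d1 d2 d3 d4 b c'"
      using edge_layering_swap path unfolding layer_sym[of V E x y]
      by (intro path_to_N5.intro path_to_N5_axioms.intro) auto
    then show False
      using path_to_N5.card_N2_le_4 N2 unfolding layer_sym[of V E x y] by fastforce
  qed
qed

end

theorem lemma28:
  fixes V :: "'a set" and E :: "'a \<Rightarrow> 'a \<Rightarrow> bool" and x y r :: 'a
  assumes "simple_graph V E"
    and "\<not> has_induced V E 8 S115"
    and "\<not> has_induced V E 4 K4"
    and "\<not> has_induced V E 4 diamond"
    and "\<not> has_induced V E 5 butterfly"
    and "E x y"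
    and "r \<in> V" and "E r x" and "\<not> E r y"
    and "\<forall>u\<in>layer V E x y 2. \<forall>v\<in>layer V E x y 2. \<not> E u v"
    and "\<forall>z\<in>layer V E x y 3. card {w \<in> layer V E x y 2. E z w} = 1"
    and "card (layer V E x y 2) \<ge> 5"
    and "layer V E x y 5 \<noteq> {}"
  shows "\<not> has_induced (layer V E x y 5) E 3 P3 \<and> \<not> has_induced (layer V E x y 5) E 3 K3"
proof -
  interpret edge_layering V E x y
    using assms(1-6,10,11) by unfold_locales
  have no_path: False if "has_induced (N 5) E 3 H" "H 0 1" "H 1 2" for H
    using has_induced_3_path[OF that] N5_neighbours_unique[OF assms(12)] by metis
  show ?thesis
    using no_path[of P3] no_path[of K3] by (auto simp: P3_def K3_def sym_edges_def)
qed

end
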